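(* Assume $a^2\rho(\mathbf P_1\mathbf E)<1$, let $\theta\in\mathbb N$ and $\mathcal X\ge0$. For every reception index $j$ and every channel state $\gamma_{S_j}$, if $x_{S_j}^2\ge\mathcal X$ then $$\mathcal J_{S_j}^\theta\le\mathbf Q_{\mathcal X}(\theta)\,\mathbf P_0^{\theta-1}\mathbf P_1\boldsymbol\delta_{\gamma_{S_j}},$$ where $\mathbf Q_{\mathcal X}(\theta):=\big[\mathcal Z_\theta(\bar a^2)-\mathcal Z_\theta(c^2)\big]\max\{\mathcal X,Bc^{-2\theta}\}+\bar M\big[\mathcal Z_\theta(a^2)-\mathcal Z_\theta(1)\big]$ and $\mathcal Z_\theta(b):=b^\theta\mathbf d^T(\mathbf I-b\mathbf P_1\mathbf E)^{-1}$.
   Context: Setup. Fix reals $a,L$ with $|a|>1$ and $\bar a:=a+L$ satisfying $0<\bar a^2<1$; fix $c$ with $\bar a^2<c^2<1$, $M>0$, $B>0$, and $\bar M:=M/(a^2-1)$. Plant $x_{k+1}=ax_k+u_k+v_k$, $v_k$ i.i.d., mean $0$, variance $M$, independent of everything else. Sensor decisions $t_k\in\{0,1\}$, receptions $r_k\in\{0,1\}$ ($r_k=0$ if $t_k=0$). Controller $u_k=L\hat x_k^+$, $\hat x_k:=\bar a\hat x_{k-1}^+$, $\hat x_k^+:=x_k$ if $r_k=1$, else $\hat x_k$. Channel state $\gamma_k\in\{1,\dots,n\}$ with $\Pr[\gamma_{k+1}=i\mid\gamma_k=j,t_k=\ell]=(\mathbf P_\ell)_{ij}$, $\mathbf P_0,\mathbf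 P_1$ column-stochastic; drop probabilities $\mathbf e\in[0,1]^n$ (if $t_k=1$, $r_k=1$ w.p. $1-e_{\gamma_k}$); $\mathbf E:=\mathrm{diag}(\mathbf e)$, $\mathbf d:=\mathbf 1-\mathbf e$, $\mathbf P^0:=\mathbf I$, $\boldsymbol\delta_i$ standard basis vectors, $\rho$ spectral radius. $r_0=1$; $R_k:=\max\{i<k:r_i=1\}$; $S_0:=0$, $S_{j+1}:=\min\{k>S_j:r_k=1\}$. $I_k^+$ is the post-transmission information at time $k$, which at a reception time $S_j$ contains $x_{S_j}$, $z^+_{S_j}=0$, $S_j$, $\gamma_{S_j}$. Performance function $h_k:=x_k^2-\max\{c^{2(k-R_k)}x_{R_k}^2,B\}$. Nominal policy $\mathcal T_k^D$: $t_i=0$ for $k\le i\le k+D-1$, $t_i=1$ for $i\ge k+D$. Performance-evaluation function: $\mathcal J_{S_j}^\theta:=\mathbb E_{\mathcal T^{\theta-1}_{S_j+1}}[h_{S_{j+1}}\mid I_{S_j}^+]=\sum_{w\ge\theta}H(w,x_{S_j}^2)\,\mathbf d^T(\mathbf P_1\mathbf E)^{w-\theta}\mathbf P_0^{\theta-1}\mathbf P_1\boldsymbol\delta_{\gamma_{S_j}}$, where $H(w,y):=\bar a^{2w}y+\bar M(a^{2w}-1)-\max\{c^{2w}y,B\}$. *)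

theory Defs
  imports "HOL-Analysis.Analysis"
begin

(* Matrix power for real^'n^'n (note: "^" on vec types is componentwise, so we define it). *)
primrec matpow :: "real^'n^'n \<Rightarrow> nat \<Rightarrow> real^'n^'n" where
  "matpow A 0 = mat 1"
| "matpow A (Suc k) = A ** matpow A k"

definition diagm :: "real^'n \<Rightarrow> real^'n^'n" where
  "diagm e = (\<chi> i j. if i = j then e$i else 0)"

definition cmat_eigenvalues :: "real^'n^'n \<Rightarrow> complex set" where
  "cmat_eigenvalues A = {z. \<exists>v::complex^'n. v \<noteq> 0 \<and>
      (\<chi> i. \<Sum>j\<in>UNIV. complex_of_real (A$i$j) * v$j) = z *s v}"

definition spectral_radius :: "real^'n^'n \<Rightarrow> real" where
  "spectral_radius A = Max (cmod ` cmat_eigenvalues A)"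

definition column_stochastic :: "real^'n^'n \<Rightarrow> bool" where
  "column_stochastic P \<longleftrightarrow> (\<forall>i j. 0 \<le> P$i$j) \<and> (\<forall>j. (\<Sum>i\<in>UNIV. P$i$j) = 1)"

definition Hfun :: "real \<Rightarrow> real \<Rightarrow> real \<Rightarrow> real \<Rightarrow> real \<Rightarrow> nat \<Rightarrow> real \<Rightarrow> real" where
  "Hfun a L c M B w y = (a + L)^(2*w) * y + (M / (a^2 - 1)) * (a^(2*w) - 1) - max (c^(2*w) * y) B"

(* Performance-evaluation function J^theta at a reception time, with y = x_{S_j}^2 and
   current channel state g:
   sum_{w >= theta} H(w,y) d^T (P1 E)^(w-theta) P0^(theta-1) P1 delta_g *)
definition Jfun :: "real \<Rightarrow> real \<Rightarrow> real \<Rightarrow> real \<Rightarrow> real \<Rightarrow> real^'n^'n \<Rightarrow> real^'n^'n \<Rightarrow> real^'n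
      \<Rightarrow> nat \<Rightarrow> real \<Rightarrow> 'n \<Rightarrow> real" where
  "Jfun a L c M B P0 P1 e \<theta> y g =
     (\<Sum>k. Hfun a L c M B (k + \<theta>) y *
        ((1 - e) \<bullet> (matpow (P1 ** diagm e) k *v
            (matpow P0 (\<theta> - 1) *v (P1 *v axis g 1)))))"

definition Zfun :: "real^'n^'n \<Rightarrow> real^'n \<Rightarrow> nat \<Rightarrow> real \<Rightarrow> real^'n" where
  "Zfun P1 e \<theta> b = b^\<theta> *s ((1 - e) v* matrix_inv (mat 1 - b *\<^sub>R (P1 ** diagm e)))"

definition Qfun :: "real \<Rightarrow> real \<Rightarrow> real \<Rightarrow> real \<Rightarrow> real \<Rightarrow> real^'n^'n \<Rightarrow> real^'n \<Rightarrow> real \<Rightarrow> nat \<Rightarrow> real^'n" where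
  "Qfun a L c M B P1 e X \<theta> =
     (max X (B / c^(2*\<theta>))) *s (Zfun P1 e \<theta> ((a + L)^2) - Zfun P1 e \<theta> (c^2))
     + (M / (a^2 - 1)) *s (Zfun P1 e \<theta> (a^2) - Zfun P1 e \<theta> 1)"

end

(*
  J is the series  sum_k H(theta + k, y) * q_k  with nonnegative weights
  q_k = d^T (P1 E)^k P0^(theta - 1) P1 delta_g.  For w >= theta and y >= X a case split on the
  maximum in H gives
    H(w, y) <= (abar^(2w) - c^(2w)) * max X (B / c^(2 theta)) + Mbar * (a^(2w) - 1),
  which is affine in the geometric sequences b^w, b in {abar^2, c^2, a^2, 1}.  Summing termwise,
  each series  sum_k b^(theta + k) q_k  equals  Z_theta(b) P0^(theta - 1) P1 delta_g  by the
  Neumann series for (I - b P1 E)^-1, which converges because b rho(P1 E) <= a^2 rho(P1 E) < 1.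
  The geometric decay of the powers of a matrix with spectral radius below 1 comes from the
  Jordan normal form library, after transferring the matrix to its representation there.
*)

theory Submission
  imports Defs "Jordan_Normal_Form.Spectral_Radius"
begin

no_notation Matrix.vec_index (infixl \<open>$\<close> 100)
no_notation Matrix.scalar_prod (infix \<open>\<bullet>\<close> 70)
hide_const (open) Matrix.mat Matrix.vec Spectral_Radius.spectral_radius

section \<open>Transfer to Jordan normal form matrices\<close>

definition enum_index :: "'n::finite \<Rightarrow> nat" where
  "enum_index = (SOME f. bij_betw f UNIV {0..<CARD('n)})"

lemma bij_enum_index: "bij_betw (enum_index :: 'n::finite \<Rightarrow> nat) UNIV {0..<CARD('n)}"
proof -
  have "\<exists>f. bij_betw f (UNIV :: 'n set) {0..<CARD('n)}"
    using ex_bij_betw_finite_nat[of "UNIV :: 'n set"] by simp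
  then show ?thesis unfolding enum_index_def by (rule someI_ex)
qed

definition enum_elem :: "nat \<Rightarrow> 'n::finite" where
  "enum_elem = inv_into UNIV enum_index"

lemma enum_elem_index [simp]: "enum_elem (enum_index (x :: 'n::finite)) = x"
  using bij_enum_index[where 'n='n] unfolding enum_elem_def bij_betw_def by (simp add: inv_f_f)

lemma enum_index_elem [simp]:
  assumes "i < CARD('n)"
  shows "enum_index (enum_elem i :: 'n::finite) = i"
proof -
  have "i \<in> range (enum_index :: 'n \<Rightarrow> nat)"
    using bij_enum_index[where 'n='n] assms by (simp add: bij_betw_def)
  then show ?thesis unfolding enum_elem_def by (rule f_inv_into_f)
qed

lemma enum_index_less [simp]: "enum_index (x :: 'n::finite) < CARD('n)"
  using bij_enum_index by (auto simp: bij_betw_def)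

lemma sum_UNIV_enum_index:
  "(\<Sum>m\<in>UNIV. h m) = (\<Sum>l<CARD('n). h (enum_elem l :: 'n::finite))"
proof -
  have "bij_betw enum_elem {0..<CARD('n)} (UNIV :: 'n set)"
    unfolding enum_elem_def using bij_enum_index by (rule bij_betw_inv_into)
  then show ?thesis
    by (simp add: sum.reindex_bij_betw atLeast0LessThan)
qed

definition to_cmat :: "real^'n^'n \<Rightarrow> complex mat" where
  "to_cmat A = Matrix.mat CARD('n) CARD('n)
     (\<lambda>(i, j). complex_of_real (A $ enum_elem i $ enum_elem j))"

definition to_cvec :: "complex^'n \<Rightarrow> complex Matrix.vec" where
  "to_cvec w = Matrix.vec CARD('n) (\<lambda>l. w $ enum_elem l)"

lemma to_cmat_carrier [simp]: "to_cmat (A :: real^'n::finite^'n) \<in> carrier_mat CARD('n) CARD('n)"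
  by (simp add: to_cmat_def)

lemma to_cvec_carrier [simp]: "to_cvec (w :: complex^'n::finite) \<in> carrier_vec CARD('n)"
  by (simp add: to_cvec_def)

lemma dim_to_cmat [simp]:
  "dim_row (to_cmat (A :: real^'n::finite^'n)) = CARD('n)"
  "dim_col (to_cmat (A :: real^'n::finite^'n)) = CARD('n)"
  by (simp_all add: to_cmat_def)

lemma index_to_cmat [simp]:
  "i < CARD('n) \<Longrightarrow> j < CARD('n) \<Longrightarrow>
     to_cmat (A :: real^'n::finite^'n) $$ (i, j) = complex_of_real (A $ enum_elem i $ enum_elem j)"
  by (simp add: to_cmat_def)

lemma to_cmat_one: "to_cmat (mat 1 :: real^'n::finite^'n) = 1\<^sub>m CARD('n)"
proof (rule eq_matI)
  fix i j assume "i < dim_row (1\<^sub>m CARD('n))" "j < dim_col (1\<^sub>m CARD('n))"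
  then have ij: "i < CARD('n)" "j < CARD('n)" by auto
  then have "(enum_elem i :: 'n) = enum_elem j \<longleftrightarrow> i = j"
    by (metis enum_index_elem)
  with ij show "to_cmat (mat 1 :: real^'n^'n) $$ (i, j) = 1\<^sub>m CARD('n) $$ (i, j)"
    by (simp add: Finite_Cartesian_Product.mat_def)
qed (auto simp: to_cmat_def)

lemma to_cmat_mult: "to_cmat (A ** B) = to_cmat A * to_cmat (B :: real^'n::finite^'n)"
  by (rule eq_matI)
     (auto simp: to_cmat_def matrix_matrix_mult_def scalar_prod_def sum_UNIV_enum_index atLeast0LessThan)

lemma matpow_Suc_right: "matpow A (Suc k) = matpow A k ** A"
  by (induction k) (simp_all add: matrix_mul_assoc)

lemma to_cmat_matpow: "to_cmat (matpow A k) = to_cmat (A :: real^'n::finite^'n) ^\<^sub>m k"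
  by (induction k) (simp add: to_cmat_one, simp only: matpow_Suc_right pow_mat.simps to_cmat_mult)

lemma to_cvec_eq_iff: "to_cvec v = to_cvec w \<longleftrightarrow> v = (w :: complex^'n::finite)"
proof
  assume "to_cvec v = to_cvec w"
  then have "vec_index (to_cvec v) (enum_index i) = vec_index (to_cvec w) (enum_index i)" for i :: 'n
    by simp
  then show "v = w" by (simp add: to_cvec_def Finite_Cartesian_Product.vec_eq_iff)
qed simp

lemma to_cvec_zero: "to_cvec (0 :: complex^'n::finite) = 0\<^sub>v CARD('n)"
  by (rule eq_vecI) (simp_all add: to_cvec_def)

lemma to_cvec_smult: "to_cvec (z *s w) = z \<cdot>\<^sub>v to_cvec (w :: complex^'n::finite)"
  by (rule eq_vecI) (simp_all add: to_cvec_def)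

lemma carrier_vec_to_cvec:
  "v \<in> carrier_vec CARD('n) \<Longrightarrow> v = to_cvec (\<chi> i::'n::finite. vec_index v (enum_index i))"
  by (rule eq_vecI) (simp_all add: to_cvec_def)

lemma to_cmat_mult_to_cvec:
  "to_cmat A *\<^sub>v to_cvec w = to_cvec (\<chi> i. \<Sum>j\<in>UNIV. complex_of_real (A$i$j) * w$j)"
  for A :: "real^'n::finite^'n"
  by (rule eq_vecI)
     (simp_all add: to_cmat_def to_cvec_def scalar_prod_def sum_UNIV_enum_index atLeast0LessThan)

lemma spectrum_to_cmat: "spectrum (to_cmat A) = cmat_eigenvalues (A :: real^'n::finite^'n)"
proof -
  have "spectrum (to_cmat A) =
      {z. \<exists>v \<in> carrier_vec CARD('n). v \<noteq> 0\<^sub>v CARD('n) \<and> to_cmat A *\<^sub>v v = z \<cdot>\<^sub>v v}"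
    by (auto simp: spectrum_def eigenvalue_def eigenvector_def)
  also have "\<dots> = {z. \<exists>w :: complex^'n. to_cvec w \<noteq> 0\<^sub>v CARD('n) \<and>
      to_cmat A *\<^sub>v to_cvec w = z \<cdot>\<^sub>v to_cvec w}"
  proof (intro Collect_cong iffI)
    fix z assume "\<exists>v \<in> carrier_vec CARD('n). v \<noteq> 0\<^sub>v CARD('n) \<and> to_cmat A *\<^sub>v v = z \<cdot>\<^sub>v v"
    then obtain v where v: "v \<in> carrier_vec CARD('n)" "v \<noteq> 0\<^sub>v CARD('n)" "to_cmat A *\<^sub>v v = z \<cdot>\<^sub>v v"
      by blast
    let ?w = "\<chi> i::'n. vec_index v (enum_index i)"
    have "v = to_cvec ?w" using v(1) by (rule carrier_vec_to_cvec)
    then show "\<exists>w :: complex^'n. to_cvec w \<noteq> 0\<^sub>v CARD('n) \<and> to_cmat A *\<^sub>v to_cvec w = z \<cdot>\<^sub>v to_cvec w"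
      using v by (intro exI[of _ ?w]) (simp flip: \<open>v = to_cvec ?w\<close>)
  qed (use to_cvec_carrier in blast)
  also have "\<dots> = cmat_eigenvalues A"
    by (simp add: cmat_eigenvalues_def to_cmat_mult_to_cvec flip: to_cvec_zero to_cvec_smult)
       (simp add: to_cvec_eq_iff)
  finally show ?thesis .
qed

lemma finite_cmat_eigenvalues: "finite (cmat_eigenvalues (A :: real^'n::finite^'n))"
  using card_finite_spectrum(1)[OF to_cmat_carrier] by (simp add: spectrum_to_cmat)

lemma cmat_eigenvalues_nonempty: "cmat_eigenvalues (A :: real^'n::finite^'n) \<noteq> {}"
  using spectrum_non_empty[OF to_cmat_carrier] by (simp add: spectrum_to_cmat)

lemma norm_le_spectral_radius: "z \<in> cmat_eigenvalues A \<Longrightarrow> cmod z \<le> spectral_radius A"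
  unfolding Defs.spectral_radius_def using finite_cmat_eigenvalues by (intro Max_ge) auto

lemma spectral_radius_nonneg: "0 \<le> spectral_radius (A :: real^'n::finite^'n)"
  using cmat_eigenvalues_nonempty norm_le_spectral_radius by (meson all_not_in_conv norm_ge_zero order_trans)

lemma spectral_radius_eq_jnf:
  "spectral_radius A = Spectral_Radius.spectral_radius (to_cmat A)"
  unfolding Defs.spectral_radius_def Spectral_Radius.spectral_radius_def spectrum_to_cmat ..

lemma spectral_radius_scaleR_le:
  "spectral_radius (s *\<^sub>R A) \<le> \<bar>s\<bar> * spectral_radius (A :: real^'n::finite^'n)"
  unfolding Defs.spectral_radius_def [of "s *\<^sub>R A"]
proof (subst Max_le_iff, goal_cases)
  case 3
  show ?case
  proof
    fix x assume "x \<in> cmod ` cmat_eigenvalues (s *\<^sub>R A)"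
    then obtain z w where x: "x = cmod z" and "w \<noteq> 0"
      and zw: "(\<chi> i. \<Sum>j\<in>UNIV. complex_of_real ((s *\<^sub>R A)$i$j) * w$j) = z *s w"
      unfolding cmat_eigenvalues_def by blast
    have eig: "complex_of_real s * (\<Sum>j\<in>UNIV. complex_of_real (A$i$j) * w$j) = z * w$i" for i
      using arg_cong[OF zw, of "\<lambda>u. u $ i"] by (simp add: sum_distrib_left mult.assoc)
    show "x \<le> \<bar>s\<bar> * spectral_radius A"
    proof (cases "s = 0")
      case True
      with eig \<open>w \<noteq> 0\<close> have "z = 0" by (auto simp: Finite_Cartesian_Product.vec_eq_iff)
      with x show ?thesis by (simp add: spectral_radius_nonneg)
    next
      case False
      with eig have "(\<chi> i. \<Sum>j\<in>UNIV. complex_of_real (A$i$j) * w$j) = (z / complex_of_real s) *s w"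
        by (simp add: Finite_Cartesian_Product.vec_eq_iff field_simps)
      with \<open>w \<noteq> 0\<close> have "cmod (z / complex_of_real s) \<le> spectral_radius A"
        by (intro norm_le_spectral_radius) (auto simp: cmat_eigenvalues_def)
      with False x show ?thesis by (simp add: norm_divide field_simps)
    qed
  qed
qed (use finite_cmat_eigenvalues cmat_eigenvalues_nonempty in auto)

lemma matpow_scaleR: "matpow (s *\<^sub>R A) k = s^k *\<^sub>R matpow A k"
  by (induction k) (simp_all add: scalar_matrix_assoc matrix_scalar_ac mult.commute)

lemma matpow_bounded_if_spectral_radius_less_1:
  assumes "spectral_radius (A :: real^'n::finite^'n) < 1"
  shows "\<exists>C. \<forall>k i j. \<bar>matpow A k $ i $ j\<bar> \<le> C"
proof -
  obtain C where C: "\<forall>k. norm_bound (to_cmat A ^\<^sub>m k) C"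
    using spectral_radius_jnf_norm_bound_less_1_upper_triangular[OF to_cmat_carrier] assms
    by (auto simp: spectral_radius_eq_jnf)
  have "\<bar>matpow A k $ i $ j\<bar> \<le> C" for k i j
    using C[rule_format, of k, unfolded norm_bound_def, rule_format, of "enum_index i" "enum_index j"]
    by (simp flip: to_cmat_matpow)
  then show ?thesis by blast
qed

text \<open>Rescaling \<open>A\<close> by any \<open>r\<close> strictly above its spectral radius reduces to the bounded case.\<close>

lemma matpow_geometric_bound:
  assumes "spectral_radius (A :: real^'n::finite^'n) < 1"
  shows "\<exists>C r. 0 \<le> r \<and> r < 1 \<and> (\<forall>k i j. \<bar>matpow A k $ i $ j\<bar> \<le> C * r^k)"
proof -
  define r where "r = (1 + spectral_radius A) / 2"
  have r: "0 < r" "r < 1" "spectral_radius A < r"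
    using assms spectral_radius_nonneg[of A] by (auto simp: r_def)
  have "spectral_radius ((1 / r) *\<^sub>R A) \<le> spectral_radius A / r"
    using spectral_radius_scaleR_le[of "1 / r" A] r by simp
  also have "\<dots> < 1" using r by simp
  finally obtain C where C: "\<forall>k i j. \<bar>matpow ((1 / r) *\<^sub>R A) k $ i $ j\<bar> \<le> C"
    using matpow_bounded_if_spectral_radius_less_1 by blast
  have "\<bar>matpow A k $ i $ j\<bar> \<le> C * r^k" for k i j
    using C[rule_format, of k i j] r by (simp add: matpow_scaleR abs_mult field_simps)
  with r show ?thesis by (intro exI[of _ C] exI[of _ r]) auto
qed

section \<open>Neumann series\<close>

lemma matrix_inv_eqI:
  fixes A X :: "real^'n::finite^'n"
  assumes "A ** X = mat 1"
  shows "matrix_inv A = X"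
proof -
  have XA: "X ** A = mat 1" using assms matrix_left_right_inverse by blast
  have inv: "A ** matrix_inv A = mat 1 \<and> matrix_inv A ** A = mat 1"
    unfolding matrix_inv_def using assms XA
    by (rule someI[where P = "\<lambda>A'. A ** A' = mat 1 \<and> A' ** A = mat 1", OF conjI])
  have "matrix_inv A = (X ** A) ** matrix_inv A"
    by (simp add: XA)
  also have "\<dots> = X" by (simp add: inv flip: matrix_mul_assoc)
  finally show ?thesis .
qed

lemma matrix_mul_diff_left: "(A - B) ** C = A ** C - B ** (C :: real^'n::finite^'n)"
  by (simp add: matrix_matrix_mult_def Finite_Cartesian_Product.vec_eq_iff left_diff_distrib sum_subtractf)

lemma matrix_inv_one_minus_eq_suminf:
  fixes T :: "real^'n::finite^'n"
  assumes summable: "\<And>i j. summable (\<lambda>k. matpow T k $ i $ j)"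
  shows "matrix_inv (mat 1 - T) = (\<chi> i j. \<Sum>k. matpow T k $ i $ j)"
proof (rule matrix_inv_eqI)
  define S :: "real^'n^'n" where "S = (\<chi> i j. \<Sum>k. matpow T k $ i $ j)"
  have S: "(\<lambda>k. matpow T k $ i $ j) sums (S $ i $ j)" for i j
    using summable[of i j] by (simp add: S_def summable_sums)
  have "((mat 1 - T) ** S) $ i $ j = mat 1 $ i $ j" for i j
  proof (rule sums_unique2)
    show "(\<lambda>k. ((mat 1 - T) ** matpow T k) $ i $ j) sums (((mat 1 - T) ** S) $ i $ j)"
      unfolding matrix_matrix_mult_def vec_lambda_beta by (intro sums_sum sums_mult S)
    have "(\<lambda>k. matpow T k $ i $ j - matpow T (Suc k) $ i $ j) sums (matpow T 0 $ i $ j - 0)"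
      by (intro telescope_sums' summable_LIMSEQ_zero summable)
    then show "(\<lambda>k. ((mat 1 - T) ** matpow T k) $ i $ j) sums (mat 1 $ i $ j)"
      by (simp add: matrix_mul_diff_left)
  qed
  then show "(mat 1 - T) ** S = mat 1"
    by (simp add: Finite_Cartesian_Product.vec_eq_iff)
qed

lemma sums_matrix_inv_neumann:
  fixes T :: "real^'n::finite^'n"
  assumes "spectral_radius T < 1"
  shows "(\<lambda>k. u \<bullet> (matpow T k *v w)) sums (u \<bullet> (matrix_inv (mat 1 - T) *v w))"
proof -
  obtain C r where r: "0 \<le> r" "r < 1" and C: "\<forall>k i j. \<bar>matpow T k $ i $ j\<bar> \<le> C * r^k"
    using matpow_geometric_bound[OF assms] by blast
  have summable: "summable (\<lambda>k. matpow T k $ i $ j)" for i j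
  proof (rule summable_comparison_test')
    show "summable (\<lambda>k. C * r^k)" using r by (simp add: summable_mult summable_geometric)
    show "norm (matpow T k $ i $ j) \<le> C * r^k" for k using C by simp
  qed
  have "(\<lambda>k. \<Sum>i\<in>UNIV. \<Sum>j\<in>UNIV. u $ i * (matpow T k $ i $ j * w $ j)) sums
        (\<Sum>i\<in>UNIV. \<Sum>j\<in>UNIV. u $ i * ((\<Sum>k. matpow T k $ i $ j) * w $ j))"
    using summable by (intro sums_sum sums_mult sums_mult2 summable_sums)
  then show ?thesis
    by (simp add: matrix_inv_one_minus_eq_suminf[OF summable] inner_vec_def matrix_vector_mult_def
        sum_distrib_left)
qed

lemma sums_resolvent:
  fixes A :: "real^'n::finite^'n"
  assumes "b * spectral_radius A < 1" "0 \<le> b"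
  shows "(\<lambda>k. b^k * (u \<bullet> (matpow A k *v w))) sums (u \<bullet> (matrix_inv (mat 1 - b *\<^sub>R A) *v w))"
proof -
  have "spectral_radius (b *\<^sub>R A) < 1"
    using spectral_radius_scaleR_le[of b A] assms by simp
  from sums_matrix_inv_neumann[OF this]
  show ?thesis
    by (simp add: matpow_scaleR flip: scaleR_matrix_vector_assoc)
qed

lemma nonneg_matrix_mult:
  fixes A :: "real^'k::finite^'m" and B :: "real^'n^'k"
  shows "0 \<le> A \<Longrightarrow> 0 \<le> B \<Longrightarrow> 0 \<le> A ** B"
  by (auto simp: Finite_Cartesian_Product.less_eq_vec_def matrix_matrix_mult_def intro!: sum_nonneg)

lemma nonneg_matpow: "0 \<le> (A :: real^'n::finite^'n) \<Longrightarrow> 0 \<le> matpow A k"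
  by (induction k)
     (simp add: Finite_Cartesian_Product.less_eq_vec_def Finite_Cartesian_Product.mat_def,
      simp add: nonneg_matrix_mult)

lemma nonneg_matrix_vector_mult:
  fixes A :: "real^'n::finite^'m"
  shows "0 \<le> A \<Longrightarrow> 0 \<le> x \<Longrightarrow> 0 \<le> A *v x"
  by (auto simp: Finite_Cartesian_Product.less_eq_vec_def matrix_vector_mult_def intro!: sum_nonneg)

lemma inner_nonneg_vec: "0 \<le> x \<Longrightarrow> 0 \<le> y \<Longrightarrow> 0 \<le> x \<bullet> (y :: real^'n::finite)"
  by (auto simp: Finite_Cartesian_Product.less_eq_vec_def inner_vec_def intro!: sum_nonneg)

lemma column_stochastic_nonneg: "column_stochastic P \<Longrightarrow> 0 \<le> P"
  by (simp add: column_stochastic_def Finite_Cartesian_Product.less_eq_vec_def)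

lemma mult_diff_max_le:
  fixes p t T B X y :: real
  assumes "0 \<le> p" "p \<le> t" "0 < t" "t \<le> T" "0 \<le> B" "0 \<le> X" "X \<le> y"
  shows "p * y - max (t * y) B \<le> (p - t) * max X (B / T)"
proof (cases "B \<le> t * y")
  case True
  have "B / T \<le> B / t" using assms by (intro divide_left_mono) auto
  also have "\<dots> \<le> y" using True \<open>0 < t\<close> by (simp add: divide_le_eq mult.commute)
  finally have "max X (B / T) \<le> y" using assms by simp
  then have "(p - t) * y \<le> (p - t) * max X (B / T)"
    using assms by (intro mult_left_mono_neg) auto
  with True show ?thesis by (simp add: left_diff_distrib)
next
  case False
  show ?thesis
  proof (cases "y \<le> max X (B / T)")
    case True
    have "t * X \<le> t * y" using assms by (intro mult_left_mono) auto
    with False have tX: "t * X \<le> B" by simp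
    have "t * (B / T) \<le> T * (B / T)" using assms by (intro mult_right_mono) auto
    then have "t * (B / T) \<le> B" using assms by simp
    with tX have "t * max X (B / T) \<le> B" by (simp add: max_def)
    moreover have "p * y \<le> p * max X (B / T)" using True assms by (intro mult_left_mono) auto
    ultimately show ?thesis using False by (simp add: left_diff_distrib)
  next
    case False': False
    have "p * y - B \<le> (p - t) * y" using False by (simp add: left_diff_distrib)
    also have "\<dots> \<le> (p - t) * max X (B / T)" using False' assms by (intro mult_left_mono_neg) auto
    finally show ?thesis using False by simp
  qed
qed

lemma Hfun_le:
  assumes "0 < (a + L)^2" "(a + L)^2 < c^2" "c^2 < 1" "0 \<le> B" "0 \<le> X" "X \<le> y" "\<theta> \<le> w"
  shows "Hfun a L c M B w y
    \<le> ((a + L)^(2*w) - c^(2*w)) * max X (B / c^(2*\<theta>)) + M / (a^2 - 1) * (a^(2*w) - 1)"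
proof -
  have "0 < c^2" using assms(1,2) by linarith
  have "(a + L)^(2*w) * y - max (c^(2*w) * y) B \<le> ((a + L)^(2*w) - c^(2*w)) * max X (B / c^(2*\<theta>))"
  proof (rule mult_diff_max_le)
    show "(a + L)^(2*w) \<le> c^(2*w)"
      using assms unfolding power_mult by (auto intro: power_mono)
    show "c^(2*w) \<le> c^(2*\<theta>)"
      using assms unfolding power_mult by (auto intro: power_decreasing)
  qed (use assms \<open>0 < c^2\<close> in \<open>auto simp: power_mult\<close>)
  then show ?thesis unfolding Hfun_def by simp
qed

lemma abs_Hfun_le:
  "\<bar>Hfun a L c M B w y\<bar>
     \<le> (a + L)^(2*w) * \<bar>y\<bar> + \<bar>M / (a^2 - 1)\<bar> * (a^(2*w) + 1) + c^(2*w) * \<bar>y\<bar> + \<bar>B\<bar>"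
proof -
  define u v m where "u = (a + L)^(2*w) * y" and "v = M / (a^2 - 1) * (a^(2*w) - 1)"
    and "m = max (c^(2*w) * y) B"
  have "0 \<le> a^(2*w)" by (simp add: power_mult)
  then have "\<bar>v\<bar> \<le> \<bar>M / (a^2 - 1)\<bar> * (a^(2*w) + 1)"
    unfolding v_def abs_mult by (intro mult_left_mono) (auto simp: abs_le_iff)
  moreover have "\<bar>m\<bar> \<le> \<bar>c^(2*w) * y\<bar> + \<bar>B\<bar>"
    unfolding m_def by (cases "c^(2*w) * y \<le> B") (simp_all add: max_def)
  moreover have "\<bar>u\<bar> = (a + L)^(2*w) * \<bar>y\<bar>" "\<bar>c^(2*w) * y\<bar> = c^(2*w) * \<bar>y\<bar>"
    unfolding u_def by (simp_all add: abs_mult power_mult)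
  moreover have "\<bar>u + v - m\<bar> \<le> \<bar>u\<bar> + \<bar>v\<bar> + \<bar>m\<bar>"
    using abs_triangle_ineq4[of "u + v" m] abs_triangle_ineq[of u v] by linarith
  ultimately show ?thesis unfolding Hfun_def u_def[symmetric] v_def[symmetric] m_def[symmetric] by linarith
qed

section \<open>The performance-evaluation function\<close>

text \<open>\<open>reception_prob P0 P1 e \<theta> g k\<close> is the probability that, starting in channel state \<open>g\<close>
  at a reception time and following the nominal policy, the next reception happens \<open>\<theta> + k\<close>
  steps later.\<close>

definition reception_prob :: "real^'n^'n \<Rightarrow> real^'n^'n \<Rightarrow> real^'n \<Rightarrow> nat \<Rightarrow> 'n \<Rightarrow> nat \<Rightarrow> real"
  where "reception_prob P0 P1 e \<theta> g k =
    (1 - e) \<bullet> (matpow (P1 ** diagm e) k *v (matpow P0 (\<theta> - 1) *v (P1 *v axis g 1)))"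

lemma Jfun_eq_suminf:
  "Jfun a L c M B P0 P1 e \<theta> y g = (\<Sum>k. Hfun a L c M B (k + \<theta>) y * reception_prob P0 P1 e \<theta> g k)"
  unfolding Jfun_def reception_prob_def ..

lemma reception_prob_nonneg:
  assumes "column_stochastic P0" "column_stochastic P1" "\<forall>i. 0 \<le> e$i \<and> e$i \<le> 1"
  shows "0 \<le> reception_prob P0 P1 e \<theta> g k"
proof -
  have "0 \<le> diagm e" "0 \<le> 1 - e" "0 \<le> axis g (1::real)"
    using assms(3) by (auto simp: Finite_Cartesian_Product.less_eq_vec_def diagm_def axis_def)
  moreover have "0 \<le> P0" "0 \<le> P1"
    using assms(1,2) by (simp_all add: column_stochastic_nonneg)
  ultimately show ?thesis
    unfolding reception_prob_def
    by (intro inner_nonneg_vec nonneg_matrix_vector_mult nonneg_matpow nonneg_matrix_mult)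
qed

lemma inner_Zfun:
  "Defs.Zfun P1 e \<theta> b \<bullet> v = b^\<theta> * ((1 - e) \<bullet> (matrix_inv (mat 1 - b *\<^sub>R (P1 ** diagm e)) *v v))"
  by (simp add: Defs.Zfun_def scalar_mult_eq_scaleR dot_lmul_matrix)

lemma sums_reception_prob:
  assumes "0 \<le> b" "b * spectral_radius (P1 ** diagm e) < 1"
  shows "(\<lambda>k. b^(k + \<theta>) * reception_prob P0 P1 e \<theta> g k)
           sums (Defs.Zfun P1 e \<theta> b \<bullet> (matpow P0 (\<theta> - 1) *v (P1 *v axis g 1)))"
  using sums_mult[OF sums_resolvent[OF assms(2,1)], of "b^\<theta>"]
  by (simp add: inner_Zfun reception_prob_def power_add mult_ac)

lemma summable_Hfun_mult:
  assumes q: "\<And>k. 0 \<le> q k"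
    and summable: "\<And>b. b \<in> {(a + L)^2, c^2, a^2, 1} \<Longrightarrow> summable (\<lambda>k. b^(k + \<theta>) * q k)"
  shows "summable (\<lambda>k. Hfun a L c M B (k + \<theta>) y * q k)"
proof (rule summable_comparison_test')
  let ?Mb = "\<bar>M / (a^2 - 1)\<bar>"
  show "summable (\<lambda>k. \<bar>y\<bar> * (((a + L)^2)^(k + \<theta>) * q k) + ?Mb * ((a^2)^(k + \<theta>) * q k)
      + (?Mb + \<bar>B\<bar>) * (1^(k + \<theta>) * q k) + \<bar>y\<bar> * ((c^2)^(k + \<theta>) * q k))"
    by (intro summable_add summable_mult summable) simp_all
  show "norm (Hfun a L c M B (k + \<theta>) y * q k) \<le> \<bar>y\<bar> * (((a + L)^2)^(k + \<theta>) * q k)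
      + ?Mb * ((a^2)^(k + \<theta>) * q k) + (?Mb + \<bar>B\<bar>) * (1^(k + \<theta>) * q k)
      + \<bar>y\<bar> * ((c^2)^(k + \<theta>) * q k)" for k
    using mult_right_mono[OF abs_Hfun_le[of a L c M B "k + \<theta>" y] q[of k]]
    by (simp add: abs_mult abs_of_nonneg[OF q] algebra_simps flip: power_mult)
qed

lemma suminf_Hfun_le:
  assumes q: "\<And>k. 0 \<le> q k"
    and Z: "\<And>b. b \<in> {(a + L)^2, c^2, a^2, 1} \<Longrightarrow> (\<lambda>k. b^(k + \<theta>) * q k) sums Z b"
    and "0 < (a + L)^2" "(a + L)^2 < c^2" "c^2 < 1" "0 \<le> B" "0 \<le> X" "X \<le> y"
  shows "(\<Sum>k. Hfun a L c M B (k + \<theta>) y * q k)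
    \<le> max X (B / c^(2*\<theta>)) * (Z ((a + L)^2) - Z (c^2)) + M / (a^2 - 1) * (Z (a^2) - Z 1)"
proof -
  define m where "m = max X (B / c^(2*\<theta>))"
  define Mb where "Mb = M / (a^2 - 1)"
  define R where "R k = m * (((a + L)^2)^(k + \<theta>) * q k - (c^2)^(k + \<theta>) * q k)
    + Mb * ((a^2)^(k + \<theta>) * q k - 1^(k + \<theta>) * q k)" for k
  have R: "R sums (m * (Z ((a + L)^2) - Z (c^2)) + Mb * (Z (a^2) - Z 1))"
    unfolding R_def by (intro sums_add sums_mult sums_diff Z) simp_all
  have "Hfun a L c M B (k + \<theta>) y * q k \<le> R k" for k
  proof -
    have "Hfun a L c M B (k + \<theta>) y
        \<le> ((a + L)^(2*(k + \<theta>)) - c^(2*(k + \<theta>))) * m + Mb * (a^(2*(k + \<theta>)) - 1)"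
      unfolding m_def Mb_def by (rule Hfun_le) (use assms in auto)
    from mult_right_mono[OF this q[of k]]
    show ?thesis unfolding R_def by (simp add: algebra_simps flip: power_mult)
  qed
  moreover have "summable (\<lambda>k. Hfun a L c M B (k + \<theta>) y * q k)"
    by (rule summable_Hfun_mult[OF q sums_summable[OF Z]])
  ultimately have "(\<Sum>k. Hfun a L c M B (k + \<theta>) y * q k) \<le> (\<Sum>k. R k)"
    using R by (intro suminf_le) (auto simp: sums_iff)
  with R show ?thesis unfolding m_def[symmetric] Mb_def[symmetric] by (simp add: sums_iff)
qed

lemma inner_Qfun:
  "Qfun a L c M B P1 e X \<theta> \<bullet> v
    = max X (B / c^(2*\<theta>)) * (Defs.Zfun P1 e \<theta> ((a + L)^2) \<bullet> v - Defs.Zfun P1 e \<theta> (c^2) \<bullet> v)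
      + M / (a^2 - 1) * (Defs.Zfun P1 e \<theta> (a^2) \<bullet> v - Defs.Zfun P1 e \<theta> 1 \<bullet> v)"
  by (simp add: Qfun_def scalar_mult_eq_scaleR inner_add_left inner_diff_left)

theorem mainTheorem7:
  fixes a L c M B X y :: real and \<theta> :: nat
    and P0 P1 :: "real^'n^'n" and e :: "real^'n" and g :: 'n
  assumes "\<bar>a\<bar> > 1"
    and "0 < (a + L)^2" and "(a + L)^2 < 1"
    and "(a + L)^2 < c^2" and "c^2 < 1"
    and "M > 0" and "B > 0"
    and "column_stochastic P0" and "column_stochastic P1"
    and "\<forall>i. 0 \<le> e$i \<and> e$i \<le> 1"
    and "a^2 * spectral_radius (P1 ** diagm e) < 1"
    and "\<theta> \<ge> 1"
    and "X \<ge> 0"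
    and "y \<ge> X"
  shows "Jfun a L c M B P0 P1 e \<theta> y g
           \<le> Qfun a L c M B P1 e X \<theta> \<bullet> (matpow P0 (\<theta> - 1) *v (P1 *v axis g 1))"
proof -
  define v where "v = matpow P0 (\<theta> - 1) *v (P1 *v axis g 1)"
  have "1 < a^2" using assms(1) by (metis one_less_power pos2 power2_abs)
  have Z: "(\<lambda>k. b^(k + \<theta>) * reception_prob P0 P1 e \<theta> g k) sums (Defs.Zfun P1 e \<theta> b \<bullet> v)"
    if "b \<in> {(a + L)^2, c^2, a^2, 1}" for b
    unfolding v_def
  proof (rule sums_reception_prob)
    from that show "0 \<le> b" by auto
    from that have "b \<le> a^2" using assms(3,5) \<open>1 < a^2\<close> by auto
    then have "b * spectral_radius (P1 ** diagm e) \<le> a^2 * spectral_radius (P1 ** diagm e)"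
      by (intro mult_right_mono spectral_radius_nonneg)
    with assms(11) show "b * spectral_radius (P1 ** diagm e) < 1" by simp
  qed
  have "Jfun a L c M B P0 P1 e \<theta> y g
      \<le> max X (B / c^(2*\<theta>)) * (Defs.Zfun P1 e \<theta> ((a + L)^2) \<bullet> v - Defs.Zfun P1 e \<theta> (c^2) \<bullet> v)
        + M / (a^2 - 1) * (Defs.Zfun P1 e \<theta> (a^2) \<bullet> v - Defs.Zfun P1 e \<theta> 1 \<bullet> v)"
    unfolding Jfun_eq_suminf using reception_prob_nonneg[OF assms(8-10)] Z
    by (rule suminf_Hfun_le) (use assms in auto)
  then show ?thesis by (simp only: inner_Qfun v_def)
qed

end
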